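(* Let $G$ be a finite group with $Z(G)\neq 1$ and $\mathcal{D}(G/Z(G))=2$. Then $\mathcal{D}(G)-\mathcal{D}(Z(G))\ge 4$.
   Context: $\mathcal{D}(X)$ denotes the number of conjugacy classes of nontrivial subgroups $Y$ of the finite group $X$ with $N_X(Y)\neq Y$. $Z(G)$ is the center of $G$. *)

theory Defs
  imports "HOL-Algebra.Algebra"
begin

definition center :: "('a, 'b) monoid_scheme \<Rightarrow> 'a set" where
  "center G = {z \<in> carrier G. \<forall>g \<in> carrier G. z \<otimes>\<^bsub>G\<^esub> g = g \<otimes>\<^bsub>G\<^esub> z}"

definition subgroup_conj_class :: "('a, 'b) monoid_scheme \<Rightarrow> 'a set \<Rightarrow> 'a set set" where
  "subgroup_conj_class G Y = {g <#\<^bsub>G\<^esub> Y #>\<^bsub>G\<^esub> inv\<^bsub>G\<^esub> g | g. g \<in> carrier G}"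

definition calD :: "('a, 'b) monoid_scheme \<Rightarrow> nat" where
  "calD G = card (subgroup_conj_class G `
      {Y. subgroup Y G \<and> Y \<noteq> {one G} \<and> normalizer G Y \<noteq> Y})"

end

theory Submission
  imports Defs
begin

text \<open>
  Write Z for the center. Subgroups of G/Z correspond to subgroups of G containing Z,
  compatibly with conjugation and normalizers, so D(G/Z) counts the classes of subgroups Y of G
  with Z \<subset> Y and N(Y) \<noteq> Y, while D(Z) counts the nontrivial proper subgroups of Z, each
  of which is its own class in G. Conjugation fixes Z, hence preserves the position of a subgroup
  relative to Z. If some subgroup Y is incomparable with Z, then Z and Y are two further classes
  counted by D(G) (Z normalizes Y without lying in it), so D(G) \<ge> D(Z) + D(G/Z) + 2.
  Otherwise every subgroup is comparable with Z; Cauchy and Sylow subgroups then force G to be a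
  p-group, not cyclic since Z \<noteq> G. Such a group has three maximal subgroups, all normal and
  properly containing Z, so D(G/Z) \<ge> 3.
\<close>

lemma prime_dvd_if_dvd_prime_power:
  fixes p d :: nat
  assumes "Factorial_Ring.prime p" "d dvd p ^ n" "d \<noteq> 1"
  shows "p dvd d"
proof -
  obtain i where "d = p ^ i"
    using assms(1,2) divides_primepow_nat by blast
  with assms(3) show ?thesis
    by (cases i) auto
qed

lemma eq_prime_power_if_prime_divisors_eq:
  fixes n p :: nat
  assumes "n \<noteq> 0" "\<And>q. Factorial_Ring.prime q \<Longrightarrow> q dvd n \<Longrightarrow> q = p"
  shows "n = p ^ multiplicity p n"
proof (rule dvd_antisym)
  show "n dvd p ^ multiplicity p n"
  proof (rule multiplicity_le_imp_dvd[OF assms(1)])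
    fix q :: nat assume q: "Factorial_Ring.prime q"
    show "multiplicity q n \<le> multiplicity q (p ^ multiplicity p n)"
      using q assms(2)[OF q] by (cases "q dvd n") (auto simp: not_dvd_imp_multiplicity_0)
  qed
qed (rule multiplicity_dvd)

lemma (in group) conj_set_eq_image:
  assumes "g \<in> carrier G" "Y \<subseteq> carrier G"
  shows "g <# Y #> inv g = (\<lambda>y. g \<otimes> y \<otimes> inv g) ` Y"
  using assms unfolding l_coset_def r_coset_def by auto

lemma (in group) conj_set_subset_carrier:
  assumes "g \<in> carrier G" "Y \<subseteq> carrier G"
  shows "g <# Y #> inv g \<subseteq> carrier G"
  using assms by (auto simp: conj_set_eq_image)

lemma (in group) mem_normalizer_iff:
  assumes "Y \<subseteq> carrier G"
  shows "g \<in> normalizer G Y \<longleftrightarrow> g \<in> carrier G \<and> g <# Y #> inv g = Y"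
  using assms unfolding normalizer_def stabilizer_def by auto

lemma (in group) subgroup_subset_normalizer:
  assumes "subgroup H G"
  shows "H \<subseteq> normalizer G H"
  using subgroup.subset[OF normal_imp_subgroup[OF subgroup_in_normalizer[OF assms]]] by simp

lemma (in group) conj_set_conj_set:
  assumes "g \<in> carrier G" "h \<in> carrier G" "Y \<subseteq> carrier G"
  shows "g <# (h <# Y #> inv h) #> inv g = (g \<otimes> h) <# Y #> inv (g \<otimes> h)"
proof -
  have "h <# Y #> inv h \<subseteq> carrier G"
    using conj_set_subset_carrier[OF assms(2,3)] .
  then have "g <# (h <# Y #> inv h) #> inv g = (\<lambda>y. g \<otimes> (h \<otimes> y \<otimes> inv h) \<otimes> inv g) ` Y"
    using assms by (simp add: conj_set_eq_image image_image)
  also have "\<dots> = (\<lambda>y. g \<otimes> h \<otimes> y \<otimes> inv (g \<otimes> h)) ` Y"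
    using assms by (intro image_cong) (auto simp: inv_mult_group m_assoc)
  finally show ?thesis
    using assms by (simp add: conj_set_eq_image)
qed

lemma (in group) conj_set_one:
  assumes "Y \<subseteq> carrier G"
  shows "\<one> <# Y #> inv \<one> = Y"
  using assms by (simp add: lcos_mult_one)

lemma (in group) conj_set_mono:
  assumes "g \<in> carrier G" "A \<subseteq> B" "B \<subseteq> carrier G"
  shows "g <# A #> inv g \<subseteq> g <# B #> inv g"
  using assms by (auto simp: conj_set_eq_image)

lemma (in group) card_conj_set:
  assumes "g \<in> carrier G" "Y \<subseteq> carrier G"
  shows "card (g <# Y #> inv g) = card Y"
proof -
  have "inj_on (\<lambda>y. g \<otimes> y \<otimes> inv g) Y"
    using assms by (intro inj_onI) (meson conjugation_is_inj subsetD)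
  then show ?thesis using assms by (simp add: conj_set_eq_image card_image)
qed

lemma (in group) self_mem_subgroup_conj_class:
  assumes "Y \<subseteq> carrier G"
  shows "Y \<in> subgroup_conj_class G Y"
  using assms conj_set_one unfolding subgroup_conj_class_def by (metis (mono_tags, lifting) mem_Collect_eq one_closed)

lemma (in group) subgroup_conj_class_eq_singleton:
  assumes "Y \<subseteq> carrier G" "normalizer G Y = carrier G"
  shows "subgroup_conj_class G Y = {Y}"
proof -
  have "g <# Y #> inv g = Y" if "g \<in> carrier G" for g
    using assms that mem_normalizer_iff by blast
  then show ?thesis
    unfolding subgroup_conj_class_def by (auto intro: exI[of _ \<one>])
qed

lemma (in group) conj_set_normal:
  assumes "N \<lhd> G" "g \<in> carrier G"
  shows "g <# N #> inv g = N"
proof -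
  have N: "N \<subseteq> carrier G"
    using subgroup.subset[OF normal_imp_subgroup[OF assms(1)]] .
  have "g <# N = N #> g"
    using assms normal.coset_eq by blast
  then show ?thesis
    using N assms(2) by (simp add: coset_mult_assoc)
qed

lemma (in group) subgroup_conj_class_relation_to_normal:
  assumes "N \<lhd> G" "A \<in> subgroup_conj_class G B" "B \<subseteq> carrier G"
  shows "(A \<subseteq> N \<longleftrightarrow> B \<subseteq> N) \<and> (N \<subseteq> A \<longleftrightarrow> N \<subseteq> B)"
proof -
  obtain g where g: "g \<in> carrier G" and A: "A = g <# B #> inv g"
    using assms(2) unfolding subgroup_conj_class_def by blast
  have B: "B = inv g <# A #> inv (inv g)"
    using conj_set_conj_set[OF inv_closed[OF g] g assms(3)] g assms(3) by (simp add: A lcos_mult_one)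
  have N: "N \<subseteq> carrier G"
    using assms(1) normal_imp_subgroup subgroup.subset by blast
  have A_carrier: "A \<subseteq> carrier G"
    using g assms(3) by (simp add: A conj_set_subset_carrier)
  have g': "inv g \<in> carrier G"
    using g by simp
  have "A \<subseteq> N \<Longrightarrow> B \<subseteq> N"
    using conj_set_mono[OF g' _ N, of A] conj_set_normal[OF assms(1) g'] B by simp
  moreover have "B \<subseteq> N \<Longrightarrow> A \<subseteq> N"
    using conj_set_mono[OF g _ N, of B] conj_set_normal[OF assms(1) g] A by simp
  moreover have "N \<subseteq> A \<Longrightarrow> N \<subseteq> B"
    using conj_set_mono[OF g' _ A_carrier, of N] conj_set_normal[OF assms(1) g'] B by simp
  moreover have "N \<subseteq> B \<Longrightarrow> N \<subseteq> A"
    using conj_set_mono[OF g _ assms(3), of N] conj_set_normal[OF assms(1) g] A by simp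
  ultimately show ?thesis
    by blast
qed

lemma (in group) center_subgroup: "subgroup (center G) G"
proof (rule subgroupI)
  show "inv x \<in> center G" if x: "x \<in> center G" for x
  proof -
    have "inv x \<otimes> g = g \<otimes> inv x" if g: "g \<in> carrier G" for g
    proof -
      have x': "x \<in> carrier G" and comm: "x \<otimes> g = g \<otimes> x"
        using x g unfolding center_def by auto
      have "inv x \<otimes> g = inv x \<otimes> (g \<otimes> x) \<otimes> inv x"
        using x' g by (simp add: m_assoc)
      also have "\<dots> = g \<otimes> inv x"
        using x' g by (simp add: comm[symmetric] m_assoc[symmetric])
      finally show ?thesis .
    qed
    then show ?thesis
      using x unfolding center_def by auto
  qed
  show "x \<otimes> y \<in> center G" if x: "x \<in> center G" and y: "y \<in> center G" for x y
  proof -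
    have comm: "x \<otimes> y \<otimes> g = g \<otimes> (x \<otimes> y)" if g: "g \<in> carrier G" for g
    proof -
      have x': "x \<in> carrier G" "x \<otimes> g = g \<otimes> x" and y': "y \<in> carrier G" "y \<otimes> g = g \<otimes> y"
        using x y g unfolding center_def by blast+
      have "x \<otimes> y \<otimes> g = x \<otimes> (g \<otimes> y)"
        using x' y' g by (simp add: m_assoc)
      also have "\<dots> = g \<otimes> (x \<otimes> y)"
        using x' y' g by (simp add: m_assoc[symmetric])
      finally show ?thesis .
    qed
    have "x \<otimes> y \<in> carrier G"
      using x y unfolding center_def by blast
    with comm show ?thesis
      unfolding center_def by blast
  qed
next
  show "center G \<subseteq> carrier G" "center G \<noteq> {}"
    unfolding center_def using one_closed by auto
qed

lemma (in group) center_conj: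
  assumes "z \<in> center G" "g \<in> carrier G"
  shows "g \<otimes> z \<otimes> inv g = z"
proof -
  have "z \<in> carrier G" "g \<otimes> z = z \<otimes> g"
    using assms unfolding center_def by auto
  then show ?thesis
    using assms(2) by (simp add: m_assoc)
qed

lemma (in group) center_normal: "center G \<lhd> G"
  by (rule normal_invI[OF center_subgroup]) (simp add: center_conj)

lemma (in group) conj_set_central:
  assumes "Y \<subseteq> center G" "g \<in> carrier G"
  shows "g <# Y #> inv g = Y"
proof -
  have "Y \<subseteq> carrier G"
    using assms(1) subgroup.subset[OF center_subgroup] by blast
  then show ?thesis
    using assms center_conj by (auto simp: conj_set_eq_image subset_iff intro!: image_eqI)
qed

lemma (in group) normalizer_central:
  assumes "Y \<subseteq> center G"
  shows "normalizer G Y = carrier G"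
  using assms subgroup.subset[OF center_subgroup] conj_set_central
  by (auto simp: mem_normalizer_iff)

lemma (in group) center_subset_normalizer:
  assumes "Y \<subseteq> carrier G"
  shows "center G \<subseteq> normalizer G Y"
proof
  fix z assume z: "z \<in> center G"
  then have "z \<otimes> y \<otimes> inv z = y" if "y \<in> Y" for y
    using that assms by (simp add: center_def m_assoc subset_iff)
  then have "z <# Y #> inv z = Y"
    using z assms by (simp add: conj_set_eq_image center_def)
  then show "z \<in> normalizer G Y"
    using z assms by (simp add: mem_normalizer_iff center_def)
qed

lemma (in group) comm_group_center: "comm_group (G\<lparr>carrier := center G\<rparr>)"
proof (rule group.group_comm_groupI)
  show "group (G\<lparr>carrier := center G\<rparr>)"
    by (rule subgroup_imp_group[OF center_subgroup])
next
  fix x y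
  assume "x \<in> carrier (G\<lparr>carrier := center G\<rparr>)" "y \<in> carrier (G\<lparr>carrier := center G\<rparr>)"
  then have "x \<in> center G" "y \<in> carrier G"
    using subgroup.subset[OF center_subgroup] by auto
  then show "x \<otimes>\<^bsub>G\<lparr>carrier := center G\<rparr>\<^esub> y = y \<otimes>\<^bsub>G\<lparr>carrier := center G\<rparr>\<^esub> x"
    unfolding center_def by simp
qed

lemma (in comm_group) center_eq_carrier: "center G = carrier G"
  unfolding center_def using m_comm by auto

lemma (in group) center_eq_carrier_if_cyclic:
  assumes "x \<in> carrier G" "generate G {x} = carrier G"
  shows "center G = carrier G"
proof -
  have "cyclic_group G"
    using assms unfolding cyclic_group_def subgroup_generated_def by (intro bexI[of _ x]) simp_all
  then show ?thesis
    using comm_group.center_eq_carrier[OF cyclic_imp_abelian_group] by blast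
qed

definition non_self_normalizing :: "('a, 'b) monoid_scheme \<Rightarrow> 'a set set" where
  "non_self_normalizing G = {Y. subgroup Y G \<and> Y \<noteq> {\<one>\<^bsub>G\<^esub>} \<and> normalizer G Y \<noteq> Y}"

lemma calD_eq_card_classes: "calD G = card (subgroup_conj_class G ` non_self_normalizing G)"
  unfolding calD_def non_self_normalizing_def ..

lemma (in group) finite_non_self_normalizing:
  assumes "finite (carrier G)"
  shows "finite (non_self_normalizing G)"
proof (rule finite_subset)
  show "non_self_normalizing G \<subseteq> Pow (carrier G)"
    unfolding non_self_normalizing_def by (auto dest: subgroup.subset)
qed (simp add: assms)

lemma (in comm_group) calD_comm_group:
  "calD G = card {Y. subgroup Y G \<and> Y \<noteq> {\<one>} \<and> Y \<noteq> carrier G}"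
proof -
  have normalizer: "normalizer G Y = carrier G" if "subgroup Y G" for Y
    using that subgroup.subset normalizer_central center_eq_carrier by metis
  then have "non_self_normalizing G = {Y. subgroup Y G \<and> Y \<noteq> {\<one>} \<and> Y \<noteq> carrier G}"
    unfolding non_self_normalizing_def by auto
  moreover have "subgroup_conj_class G Y = {Y}" if "subgroup Y G" for Y
    using that normalizer subgroup.subset subgroup_conj_class_eq_singleton by metis
  ultimately have "subgroup_conj_class G ` non_self_normalizing G
      = (\<lambda>Y. {Y}) ` {Y. subgroup Y G \<and> Y \<noteq> {\<one>} \<and> Y \<noteq> carrier G}"
    by (auto intro!: image_cong)
  then show ?thesis
    by (simp add: calD_eq_card_classes card_image)
qed

lemma (in group) calD_center:
  "calD (G\<lparr>carrier := center G\<rparr>) = card {Y. subgroup Y G \<and> Y \<subseteq> center G \<and> Y \<noteq> {\<one>} \<and> Y \<noteq> center G}"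
proof -
  have "subgroup Y (G\<lparr>carrier := center G\<rparr>) \<longleftrightarrow> subgroup Y G \<and> Y \<subseteq> center G" for Y
    using incl_subgroup[OF center_subgroup] subgroup_incl[OF _ center_subgroup]
      subgroup.subset[of Y "G\<lparr>carrier := center G\<rparr>"] by auto
  then show ?thesis
    using comm_group.calD_comm_group[OF comm_group_center] by simp
qed

section \<open>Subgroups of a quotient group\<close>

lemma (in group_hom) conj_set_image:
  assumes "g \<in> carrier G" "Y \<subseteq> carrier G"
  shows "h g <#\<^bsub>H\<^esub> h ` Y #>\<^bsub>H\<^esub> inv\<^bsub>H\<^esub> h g = h ` (g <# Y #> inv g)"
proof -
  have "h ` Y \<subseteq> carrier H"
    using assms(2) by auto
  then have "h g <#\<^bsub>H\<^esub> h ` Y #>\<^bsub>H\<^esub> inv\<^bsub>H\<^esub> h g = (\<lambda>y. h g \<otimes>\<^bsub>H\<^esub> h y \<otimes>\<^bsub>H\<^esub> inv\<^bsub>H\<^esub> h g) ` Y"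
    using assms(1) by (simp add: H.conj_set_eq_image image_image)
  also have "\<dots> = h ` (g <# Y #> inv g)"
    using assms by (auto simp: G.conj_set_eq_image image_image subset_iff intro!: image_cong)
  finally show ?thesis .
qed

context normal
begin

lemma rcos_group_hom: "group_hom G (G Mod H) ((#>) H)"
  using r_coset_hom_Mod factorgroup_is_group
  by (simp add: group_hom_def group_hom_axioms_def is_group)

lemma Union_rcos_image:
  assumes "subgroup Y G" "H \<subseteq> Y"
  shows "\<Union> ((#>) H ` Y) = Y"
proof
  show "\<Union> ((#>) H ` Y) \<subseteq> Y"
    using assms by (auto simp: r_coset_def intro: subgroup.m_closed)
  show "Y \<subseteq> \<Union> ((#>) H ` Y)"
  proof
    fix y assume "y \<in> Y"
    then have "y \<in> H #> y"
      using assms(1) subgroup.subset rcos_self[OF _ is_subgroup] by blast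
    with \<open>y \<in> Y\<close> show "y \<in> \<Union> ((#>) H ` Y)"
      by blast
  qed
qed

lemma inj_on_rcos_image: "inj_on (image ((#>) H)) {Y. subgroup Y G \<and> H \<subseteq> Y}"
  by (rule inj_onI) (metis (mono_tags, lifting) Union_rcos_image mem_Collect_eq)

lemma subgroup_FactGroup_eq_rcos_image:
  assumes "subgroup A (G Mod H)"
  shows "subgroup (\<Union>A) G" "H \<subseteq> \<Union>A" "A = (#>) H ` \<Union>A"
proof -
  show "subgroup (\<Union>A) G"
    using factgroup_subgroup_union_subgroup[OF assms] .
  show "H \<subseteq> \<Union>A"
    using subgroup.one_closed[OF assms] by auto
  have "A \<subseteq> carrier (G Mod H)"
    using subgroup.subset[OF assms] .
  then show "A = (#>) H ` \<Union>A"
    using factgroup_subgroup_union_char[OF assms] by (auto simp: carrier_FactGroup)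
qed

lemma mem_subgroup_conj_class_supergroup:
  assumes "subgroup Y G" "H \<subseteq> Y" "A \<in> subgroup_conj_class G Y"
  shows "subgroup A G" "H \<subseteq> A"
proof -
  obtain g where "g \<in> carrier G" "A = g <# Y #> inv g"
    using assms(3) unfolding subgroup_conj_class_def by blast
  then show "subgroup A G"
    using assms(1) subgroup_conjugation_is_surj1[of "inv g" Y] by simp
  show "H \<subseteq> A"
    using assms subgroup_conj_class_relation_to_normal[OF normal_axioms] subgroup.subset by blast
qed

lemma subgroup_conj_class_FactGroup:
  assumes "Y \<subseteq> carrier G"
  shows "subgroup_conj_class (G Mod H) ((#>) H ` Y) = image ((#>) H) ` subgroup_conj_class G Y"
proof -
  interpret q: group_hom G "G Mod H" "(#>) H"
    by (rule rcos_group_hom)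
  have "subgroup_conj_class (G Mod H) ((#>) H ` Y)
      = (\<lambda>g. (H #> g) <#\<^bsub>G Mod H\<^esub> ((#>) H ` Y) #>\<^bsub>G Mod H\<^esub> inv\<^bsub>G Mod H\<^esub> (H #> g)) ` carrier G"
    unfolding subgroup_conj_class_def carrier_FactGroup by auto
  also have "\<dots> = (\<lambda>g. (#>) H ` (g <# Y #> inv g)) ` carrier G"
    using assms q.conj_set_image by (intro image_cong) auto
  finally show ?thesis
    unfolding subgroup_conj_class_def by auto
qed

lemma normalizer_FactGroup:
  assumes "subgroup Y G" "H \<subseteq> Y"
  shows "normalizer (G Mod H) ((#>) H ` Y) = (#>) H ` normalizer G Y"
proof -
  interpret q: group_hom G "G Mod H" "(#>) H"
    by (rule rcos_group_hom)
  have Y: "Y \<subseteq> carrier G"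
    using assms(1) subgroup.subset by blast
  have "H #> g \<in> normalizer (G Mod H) ((#>) H ` Y) \<longleftrightarrow> g \<in> normalizer G Y"
    if g: "g \<in> carrier G" for g
  proof -
    have "g <# Y #> inv g \<in> subgroup_conj_class G Y"
      using g unfolding subgroup_conj_class_def by blast
    then have "subgroup (g <# Y #> inv g) G" "H \<subseteq> g <# Y #> inv g"
      using mem_subgroup_conj_class_supergroup[OF assms] by blast+
    then have "(#>) H ` (g <# Y #> inv g) = (#>) H ` Y \<longleftrightarrow> g <# Y #> inv g = Y"
      using assms inj_on_rcos_image by (auto dest: inj_onD)
    moreover have "(#>) H ` Y \<subseteq> carrier (G Mod H)"
      using Y by auto
    ultimately show ?thesis
      using g Y q.conj_set_image[OF g Y]
      by (simp add: q.H.mem_normalizer_iff mem_normalizer_iff)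
  qed
  moreover have "normalizer (G Mod H) ((#>) H ` Y) \<subseteq> carrier (G Mod H)"
    unfolding normalizer_def stabilizer_def by auto
  moreover have "normalizer G Y \<subseteq> carrier G"
    unfolding normalizer_def stabilizer_def by auto
  ultimately show ?thesis
    unfolding carrier_FactGroup by blast
qed

lemma rcos_image_self: "(#>) H ` H = {H}"
proof -
  have "(#>) H ` H = (\<lambda>_. H) ` H"
    using subgroup.rcos_const[OF is_subgroup is_group] by (rule image_cong[OF refl])
  moreover have "H \<noteq> {}"
    using subgroup.one_closed[OF is_subgroup] by blast
  ultimately show ?thesis
    by (simp add: image_constant_conv)
qed

lemma rcos_image_mem_non_self_normalizing_iff:
  assumes Y: "subgroup Y G" "H \<subseteq> Y"
  shows "(#>) H ` Y \<in> non_self_normalizing (G Mod H) \<longleftrightarrow> Y \<in> non_self_normalizing G \<and> H \<subset> Y"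
proof -
  interpret q: group_hom G "G Mod H" "(#>) H"
    by (rule rcos_group_hom)
  have H_supgroup: "H \<in> {Y. subgroup Y G \<and> H \<subseteq> Y}"
    using is_subgroup by simp
  have normalizer_supgroup: "normalizer G Y \<in> {Y. subgroup Y G \<and> H \<subseteq> Y}"
    using Y normalizer_imp_subgroup[OF subgroup.subset] subgroup_subset_normalizer[of Y] by auto
  have "normalizer (G Mod H) ((#>) H ` Y) = (#>) H ` Y \<longleftrightarrow> normalizer G Y = Y"
    using Y normalizer_supgroup inj_on_rcos_image normalizer_FactGroup[OF Y]
    by (metis (mono_tags, lifting) inj_onD mem_Collect_eq)
  moreover have "(#>) H ` Y = {H} \<longleftrightarrow> Y = H"
    using Y H_supgroup inj_on_rcos_image rcos_image_self by (metis (mono_tags, lifting) inj_onD mem_Collect_eq)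
  moreover have "Y \<noteq> {\<one>}" if "H \<subset> Y"
    using that subgroup.one_closed[OF is_subgroup] by blast
  moreover have "subgroup ((#>) H ` Y) (G Mod H)"
    using Y(1) by (rule q.subgroup_img_is_subgroup)
  ultimately show ?thesis
    using Y unfolding non_self_normalizing_def by auto
qed

lemma non_self_normalizing_FactGroup:
  "non_self_normalizing (G Mod H) = image ((#>) H) ` {Y \<in> non_self_normalizing G. H \<subset> Y}"
proof
  show "non_self_normalizing (G Mod H) \<subseteq> image ((#>) H) ` {Y \<in> non_self_normalizing G. H \<subset> Y}"
  proof
    fix A assume A: "A \<in> non_self_normalizing (G Mod H)"
    then have "subgroup A (G Mod H)"
      unfolding non_self_normalizing_def by blast
    note Y = subgroup_FactGroup_eq_rcos_image[OF this]
    then have "\<Union>A \<in> {Y \<in> non_self_normalizing G. H \<subset> Y}"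
      using rcos_image_mem_non_self_normalizing_iff[OF Y(1,2)] A by simp
    with Y(3) show "A \<in> image ((#>) H) ` {Y \<in> non_self_normalizing G. H \<subset> Y}"
      by blast
  qed
  show "image ((#>) H) ` {Y \<in> non_self_normalizing G. H \<subset> Y} \<subseteq> non_self_normalizing (G Mod H)"
  proof
    fix A assume "A \<in> image ((#>) H) ` {Y \<in> non_self_normalizing G. H \<subset> Y}"
    then obtain Y where "Y \<in> non_self_normalizing G" "H \<subset> Y" "A = (#>) H ` Y"
      by blast
    moreover have "subgroup Y G"
      using \<open>Y \<in> non_self_normalizing G\<close> unfolding non_self_normalizing_def by blast
    ultimately show "A \<in> non_self_normalizing (G Mod H)"
      using rcos_image_mem_non_self_normalizing_iff[of Y] by blast
  qed
qed

lemma calD_FactGroup: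
  "calD (G Mod H) = card (subgroup_conj_class G ` {Y \<in> non_self_normalizing G. H \<subset> Y})"
proof -
  let ?U = "{Y \<in> non_self_normalizing G. H \<subset> Y}"
  have U: "subgroup Y G" "H \<subseteq> Y" if "Y \<in> ?U" for Y
    using that unfolding non_self_normalizing_def by auto
  have "subgroup_conj_class (G Mod H) ((#>) H ` Y) = image ((#>) H) ` subgroup_conj_class G Y"
    if "Y \<in> ?U" for Y
    using subgroup_conj_class_FactGroup subgroup.subset[OF U(1)[OF that]] .
  then have classes: "subgroup_conj_class (G Mod H) ` image ((#>) H) ` ?U
      = image (image ((#>) H)) ` subgroup_conj_class G ` ?U"
    unfolding image_image by (rule image_cong[OF refl])
  have "\<Union> (subgroup_conj_class G ` ?U) \<subseteq> {Y. subgroup Y G \<and> H \<subseteq> Y}"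
  proof
    fix A assume "A \<in> \<Union> (subgroup_conj_class G ` ?U)"
    then obtain Y where "Y \<in> ?U" "A \<in> subgroup_conj_class G Y"
      by blast
    then show "A \<in> {Y. subgroup Y G \<and> H \<subseteq> Y}"
      using mem_subgroup_conj_class_supergroup[OF U] by blast
  qed
  then have "inj_on (image (image ((#>) H))) (subgroup_conj_class G ` ?U)"
    by (intro inj_on_image inj_on_subset[OF inj_on_rcos_image])
  then show ?thesis
    by (simp add: calD_eq_card_classes non_self_normalizing_FactGroup classes card_image)
qed

end

section \<open>Classes relative to the center\<close>

lemma (in group) subgroup_conj_class_eq_imp_same_position:
  assumes "N \<lhd> G" "A \<subseteq> carrier G" "B \<subseteq> carrier G"
    and "subgroup_conj_class G A = subgroup_conj_class G B"
  shows "(A \<subseteq> N, N \<subseteq> A) = (B \<subseteq> N, N \<subseteq> B)"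
  using subgroup_conj_class_relation_to_normal[OF assms(1) _ assms(3)] self_mem_subgroup_conj_class[OF assms(2)]
    assms(4) by auto

lemma (in group) subgroup_conj_class_images_disjoint:
  assumes N: "N \<lhd> G" and S: "S \<subseteq> Pow (carrier G)" "S' \<subseteq> Pow (carrier G)"
    and position: "\<And>A B. A \<in> S \<Longrightarrow> B \<in> S' \<Longrightarrow> (A \<subseteq> N, N \<subseteq> A) \<noteq> (B \<subseteq> N, N \<subseteq> B)"
  shows "subgroup_conj_class G ` S \<inter> subgroup_conj_class G ` S' = {}"
proof -
  have "subgroup_conj_class G A \<noteq> subgroup_conj_class G B" if AB: "A \<in> S" "B \<in> S'" for A B
  proof
    assume "subgroup_conj_class G A = subgroup_conj_class G B"
    moreover have "A \<subseteq> carrier G" "B \<subseteq> carrier G"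
      using AB S by blast+
    ultimately have "(A \<subseteq> N, N \<subseteq> A) = (B \<subseteq> N, N \<subseteq> B)"
      by (intro subgroup_conj_class_eq_imp_same_position[OF N])
    with position[OF AB] show False ..
  qed
  then show ?thesis
    by blast
qed

lemma (in group) inj_on_subgroup_conj_class_central:
  "inj_on (subgroup_conj_class G) {Y. Y \<subseteq> center G}"
proof (rule inj_onI)
  fix A B assume A: "A \<in> {Y. Y \<subseteq> center G}" and B: "B \<in> {Y. Y \<subseteq> center G}"
    and eq: "subgroup_conj_class G A = subgroup_conj_class G B"
  have "subgroup_conj_class G Y = {Y}" if "Y \<subseteq> center G" for Y
    using that subgroup.subset[OF center_subgroup]
    by (intro subgroup_conj_class_eq_singleton normalizer_central) auto
  with A B eq show "A = B"
    by simp
qed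

lemma (in group) incomparable_subgroup_non_self_normalizing:
  assumes Y: "subgroup Y G" "\<not> Y \<subseteq> center G" "\<not> center G \<subseteq> Y"
  shows "Y \<in> non_self_normalizing G"
proof -
  have "normalizer G Y \<noteq> Y"
    using Y(3) center_subset_normalizer[OF subgroup.subset[OF Y(1)]] by blast
  moreover have "Y \<noteq> {\<one>}"
    using Y(2) subgroup.one_closed[OF center_subgroup] by blast
  ultimately show ?thesis
    using Y(1) unfolding non_self_normalizing_def by blast
qed

lemma (in group) calD_lower_bound:
  assumes fin: "finite (carrier G)" and Z1: "center G \<noteq> {\<one>}" and ZG: "center G \<noteq> carrier G"
    and Y0: "subgroup Y0 G" "\<not> Y0 \<subseteq> center G" "\<not> center G \<subseteq> Y0"
  shows "card {Y. subgroup Y G \<and> Y \<subseteq> center G \<and> Y \<noteq> {\<one>} \<and> Y \<noteq> center G}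
      + card (subgroup_conj_class G ` {Y \<in> non_self_normalizing G. center G \<subset> Y}) + 2 \<le> calD G"
proof -
  let ?Z = "center G" and ?cl = "subgroup_conj_class G"
  let ?T = "{Y. subgroup Y G \<and> Y \<subseteq> ?Z \<and> Y \<noteq> {\<one>} \<and> Y \<noteq> ?Z}"
  let ?U = "{Y \<in> non_self_normalizing G. ?Z \<subset> Y}"
  have T: "?T \<subseteq> non_self_normalizing G"
    using ZG subgroup.subset[OF center_subgroup] normalizer_central
    unfolding non_self_normalizing_def by auto
  have Z: "?Z \<in> non_self_normalizing G"
    using center_subgroup Z1 ZG normalizer_central unfolding non_self_normalizing_def by auto
  have Y0_nsn: "Y0 \<in> non_self_normalizing G"
    using incomparable_subgroup_non_self_normalizing[OF Y0] .
  have nsn: "non_self_normalizing G \<subseteq> Pow (carrier G)"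
    unfolding non_self_normalizing_def by (auto dest: subgroup.subset)
  have "finite ?T" "finite ?U"
    using finite_non_self_normalizing[OF fin] T by (auto intro: finite_subset)
  have "card (?cl ` ?T) = card ?T"
    using inj_on_subgroup_conj_class_central by (intro card_image) (auto intro: inj_on_subset)
  have "?cl ` ?T \<inter> ?cl ` ?U = {}"
    using T nsn by (intro subgroup_conj_class_images_disjoint[OF center_normal]) auto
  moreover have "?cl ` (?T \<union> ?U) \<inter> ?cl ` {?Z} = {}"
    using T Z nsn by (intro subgroup_conj_class_images_disjoint[OF center_normal]) auto
  moreover have "?cl ` (?T \<union> ?U \<union> {?Z}) \<inter> ?cl ` {Y0} = {}"
    using T Z Y0_nsn Y0(2,3) nsn by (intro subgroup_conj_class_images_disjoint[OF center_normal]) auto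
  ultimately have "card (?cl ` (?T \<union> ?U \<union> {?Z} \<union> {Y0})) = card ?T + card (?cl ` ?U) + 2"
    using \<open>finite ?T\<close> \<open>finite ?U\<close> \<open>card (?cl ` ?T) = card ?T\<close>
    by (simp add: image_Un card_Un_disjoint)
  moreover have "card (?cl ` (?T \<union> ?U \<union> {?Z} \<union> {Y0})) \<le> calD G"
    unfolding calD_eq_card_classes using T Z Y0_nsn finite_non_self_normalizing[OF fin]
    by (intro card_mono image_mono) auto
  ultimately show ?thesis
    by simp
qed

section \<open>Groups of prime power order\<close>

lemma (in group_action) orbit_subset: "x \<in> E \<Longrightarrow> orbit G \<phi> x \<subseteq> E"
  unfolding orbit_def using element_image by auto

lemma (in group_action) orbit_eq_if_mem_orbit:
  assumes "x \<in> E" "y \<in> orbit G \<phi> x"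
  shows "orbit G \<phi> y = orbit G \<phi> x"
proof -
  have y: "y \<in> E"
    using assms orbit_subset by blast
  have "x \<in> orbit G \<phi> y"
    using orbit_sym[OF assms(1) y assms(2)] .
  then show ?thesis
    using assms y orbit_trans orbit_subset by (meson subset_antisym subsetD subsetI)
qed

lemma (in group_action) prime_dvd_card_orbit:
  assumes p: "Factorial_Ring.prime p" and order: "order G = p ^ n"
    and x: "x \<in> E" and moved: "\<exists>g \<in> carrier G. \<phi> g x \<noteq> x"
  shows "p dvd card (orbit G \<phi> x)"
proof (rule prime_dvd_if_dvd_prime_power[OF p])
  have "card (orbit G \<phi> x) * card (stabilizer G \<phi> x) = p ^ n"
    using orbit_stabilizer_theorem[OF x] order by simp
  then show "card (orbit G \<phi> x) dvd p ^ n"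
    by (metis dvd_triv_left)
  show "card (orbit G \<phi> x) \<noteq> 1"
  proof
    assume "card (orbit G \<phi> x) = 1"
    then have "orbit G \<phi> x = {x}"
      using orbit_refl[OF x] by (auto simp: card_1_singleton_iff)
    with moved show False
      unfolding orbit_def by blast
  qed
qed

lemma (in group_action) card_mod_eq_card_fixed_points:
  assumes "finite S" "S \<subseteq> E" and invariant: "\<And>g x. g \<in> carrier G \<Longrightarrow> x \<in> S \<Longrightarrow> \<phi> g x \<in> S"
    and p: "Factorial_Ring.prime p" and order: "order G = p ^ n"
  shows "card S mod p = card {x \<in> S. \<forall>g \<in> carrier G. \<phi> g x = x} mod p"
proof -
  let ?F = "{x \<in> S. \<forall>g \<in> carrier G. \<phi> g x = x}"
  have orbit_S: "orbit G \<phi> x \<subseteq> S" if "x \<in> S" for x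
    using that invariant unfolding orbit_def by blast
  have orbit_fixed: "orbit G \<phi> x = {x}" if "x \<in> ?F" for x
    using that assms(2) orbit_refl unfolding orbit_def by auto
  have moved: "orbit G \<phi> x \<subseteq> S - ?F" if x: "x \<in> S - ?F" for x
  proof
    fix y assume y: "y \<in> orbit G \<phi> x"
    have "y \<notin> ?F"
    proof
      assume "y \<in> ?F"
      then have "x \<in> orbit G \<phi> y"
        using orbit_sym[OF _ _ y] x orbit_S assms(2) by blast
      with x \<open>y \<in> ?F\<close> show False
        using orbit_fixed by auto
    qed
    then show "y \<in> S - ?F"
      using y orbit_S x by blast
  qed
  have p_dvd_orbit: "p dvd card (orbit G \<phi> x)" if x: "x \<in> S - ?F" for x
    using prime_dvd_card_orbit[OF p order] x assms(2) by blast
  have Union: "\<Union> (orbit G \<phi> ` (S - ?F)) = S - ?F"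
    using moved orbit_refl assms(2) by blast
  have disjoint: "pairwise disjnt (orbit G \<phi> ` (S - ?F))"
  proof (rule pairwise_imageI)
    fix x y assume "x \<in> S - ?F" "y \<in> S - ?F" "orbit G \<phi> x \<noteq> orbit G \<phi> y"
    then show "disjnt (orbit G \<phi> x) (orbit G \<phi> y)"
      using disjoint_union[of "orbit G \<phi> x" "orbit G \<phi> y"] assms(2)
      unfolding orbits_def disjnt_def by blast
  qed
  have "finite A" if "A \<in> orbit G \<phi> ` (S - ?F)" for A
    using that moved assms(1) finite_subset by blast
  then have "card (S - ?F) = sum card (orbit G \<phi> ` (S - ?F))"
    using card_Union_disjoint[OF disjoint] Union by simp
  also have "p dvd \<dots>"
    using p_dvd_orbit by (auto intro: dvd_sum)
  finally have "p dvd card (S - ?F)" .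
  moreover have "card S = card ?F + card (S - ?F)"
    using card_Un_disjoint[of ?F "S - ?F"] assms(1) by (simp add: Un_absorb1 finite_subset)
  ultimately show ?thesis
    by (auto elim: dvdE)
qed

lemma (in group_action) card_stabilizer_eq_if_mem_orbit:
  assumes "finite (carrier G)" "x \<in> E" "y \<in> orbit G \<phi> x"
  shows "card (stabilizer G \<phi> y) = card (stabilizer G \<phi> x)"
proof -
  have y: "y \<in> E"
    using assms(2,3) orbit_subset by blast
  have orbit: "orbit G \<phi> y = orbit G \<phi> x"
    using orbit_eq_if_mem_orbit[OF assms(2,3)] .
  have "orbit G \<phi> x = (\<lambda>g. \<phi> g x) ` carrier G"
    unfolding orbit_def by blast
  then have "card (orbit G \<phi> x) \<noteq> 0"
    using assms(1) orbit_refl[OF assms(2)] by auto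
  then show ?thesis
    using orbit_stabilizer_theorem[OF assms(2)] orbit_stabilizer_theorem[OF y] orbit
    by (metis mult_left_cancel)
qed

definition conj_action :: "('a, 'b) monoid_scheme \<Rightarrow> 'a \<Rightarrow> 'a set \<Rightarrow> 'a set" where
  "conj_action G = (\<lambda>g. \<lambda>K \<in> {K. K \<subseteq> carrier G}. g <#\<^bsub>G\<^esub> K #>\<^bsub>G\<^esub> inv\<^bsub>G\<^esub> g)"

lemma (in group) group_action_conj_action: "group_action G {K. K \<subseteq> carrier G} (conj_action G)"
  unfolding conj_action_def by (rule action_by_conjugation_on_power_set)

lemma (in group) normalizer_eq_stabilizer: "normalizer G Y = stabilizer G (conj_action G) Y"
  unfolding normalizer_def conj_action_def ..

lemma (in group) subgroup_conj_class_eq_orbit: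
  assumes "Y \<subseteq> carrier G"
  shows "subgroup_conj_class G Y = orbit G (conj_action G) Y"
  using assms unfolding subgroup_conj_class_def orbit_def conj_action_def by auto

lemma (in group) card_subgroup_conj_class_mult_normalizer:
  assumes "Y \<subseteq> carrier G"
  shows "card (subgroup_conj_class G Y) * card (normalizer G Y) = order G"
  using group_action.orbit_stabilizer_theorem[OF group_action_conj_action] assms
  by (simp add: subgroup_conj_class_eq_orbit normalizer_eq_stabilizer)

lemma (in group) card_normalizer_conj_set:
  assumes "finite (carrier G)" "H \<subseteq> carrier G" "g \<in> carrier G"
  shows "card (normalizer G (g <# H #> inv g)) = card (normalizer G H)"
proof -
  have "g <# H #> inv g \<in> subgroup_conj_class G H"
    using assms(3) unfolding subgroup_conj_class_def by blast
  then have "g <# H #> inv g \<in> orbit G (conj_action G) H"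
    using subgroup_conj_class_eq_orbit[OF assms(2)] by simp
  then have "card (stabilizer G (conj_action G) (g <# H #> inv g)) = card (stabilizer G (conj_action G) H)"
    using group_action.card_stabilizer_eq_if_mem_orbit[OF group_action_conj_action assms(1)] assms(2)
    by blast
  then show ?thesis
    by (simp only: normalizer_eq_stabilizer)
qed

lemma (in group) conj_set_eq_if_normalizes:
  assumes fin: "finite (carrier G)" and H: "subgroup H G" "normalizer G H = H"
    and g: "g \<in> carrier G" and normalizes: "H \<subseteq> normalizer G (g <# H #> inv g)"
  shows "g <# H #> inv g = H"
proof -
  let ?K = "g <# H #> inv g"
  have H_carrier: "H \<subseteq> carrier G"
    using subgroup.subset[OF H(1)] .
  have K: "subgroup ?K G"
    using subgroup_conjugation_is_surj1[of "inv g" H] g H(1) by simp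
  have card_K: "card ?K = card H"
    using card_conj_set[OF g H_carrier] .
  have "normalizer G ?K \<subseteq> carrier G"
    unfolding normalizer_def stabilizer_def by auto
  moreover have "card (normalizer G ?K) = card ?K"
    using card_normalizer_conj_set[OF fin H_carrier g] H(2) card_K by simp
  ultimately have "normalizer G ?K = ?K"
    using subgroup_subset_normalizer[OF K] fin by (metis card_subset_eq finite_subset)
  then have "H \<subseteq> ?K"
    using normalizes by simp
  moreover have "finite ?K"
    using K fin subgroup.subset finite_subset by blast
  ultimately show ?thesis
    using card_K card_subset_eq by metis
qed

lemma (in group) conjugates_fixed_by_self_normalizing:
  assumes fin: "finite (carrier G)" and H: "subgroup H G" "normalizer G H = H"
  shows "{K \<in> subgroup_conj_class G H. \<forall>h \<in> H. h <# K #> inv h = K} = {H}"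
proof -
  have H_carrier: "H \<subseteq> carrier G"
    using subgroup.subset[OF H(1)] .
  have unique: "K = H"
    if K_class: "K \<in> subgroup_conj_class G H" and fixed: "\<forall>h \<in> H. h <# K #> inv h = K" for K
  proof -
    obtain g where g: "g \<in> carrier G" and K: "K = g <# H #> inv g"
      using K_class unfolding subgroup_conj_class_def by blast
    have "K \<subseteq> carrier G"
      using g H_carrier by (simp add: K conj_set_subset_carrier)
    then have "H \<subseteq> normalizer G K"
      using fixed H_carrier mem_normalizer_iff[of K] by blast
    then show "K = H"
      using conj_set_eq_if_normalizes[OF fin H g] K by simp
  qed
  have "h <# H #> inv h = H" if "h \<in> H" for h
  proof -
    have "h \<in> normalizer G H"
      using subgroup_subset_normalizer[OF H(1)] that by blast
    then show ?thesis
      using mem_normalizer_iff[OF H_carrier] by simp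
  qed
  then have "H \<in> {K \<in> subgroup_conj_class G H. \<forall>h \<in> H. h <# K #> inv h = K}"
    using self_mem_subgroup_conj_class[OF H_carrier] by blast
  with unique show ?thesis
    by blast
qed

lemma (in group) card_subgroup_conj_class_mod_eq_fixed:
  assumes fin: "finite (carrier G)" and p: "Factorial_Ring.prime p"
    and H: "subgroup H G" "card H = p ^ m" and Y: "Y \<subseteq> carrier G"
  shows "card (subgroup_conj_class G Y) mod p
    = card {K \<in> subgroup_conj_class G Y. \<forall>h \<in> H. h <# K #> inv h = K} mod p"
proof -
  let ?C = "subgroup_conj_class G Y" and ?E = "{K. K \<subseteq> carrier G}"
  interpret conj: group_action G ?E "conj_action G"
    by (rule group_action_conj_action)
  interpret conj_H: group_action "G\<lparr>carrier := H\<rparr>" ?E "conj_action G"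
    by (rule conj.induced_action[OF H(1)])
  have H_carrier: "H \<subseteq> carrier G"
    using subgroup.subset[OF H(1)] .
  have C: "?C = orbit G (conj_action G) Y"
    using subgroup_conj_class_eq_orbit[OF Y] .
  then have C_E: "?C \<subseteq> ?E"
    using conj.orbit_subset Y by blast
  moreover have "finite ?E"
    using fin by simp
  ultimately have "finite ?C"
    using finite_subset by blast
  have "conj_action G h K \<in> ?C" if "h \<in> H" "K \<in> ?C" for h K
  proof -
    have "conj_action G h K \<in> orbit G (conj_action G) K"
      using that H_carrier unfolding orbit_def by blast
    then show ?thesis
      using conj.orbit_eq_if_mem_orbit that(2) C Y by auto
  qed
  moreover have "{K \<in> ?C. \<forall>h \<in> carrier (G\<lparr>carrier := H\<rparr>). conj_action G h K = K}
      = {K \<in> ?C. \<forall>h \<in> H. h <# K #> inv h = K}"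
  proof (rule Collect_cong)
    fix K
    have "conj_action G h K = h <# K #> inv h" if "K \<in> ?C" for h
      using that C_E unfolding conj_action_def by auto
    then show "(K \<in> ?C \<and> (\<forall>h \<in> carrier (G\<lparr>carrier := H\<rparr>). conj_action G h K = K))
        = (K \<in> ?C \<and> (\<forall>h \<in> H. h <# K #> inv h = K))"
      by auto
  qed
  moreover have "order (G\<lparr>carrier := H\<rparr>) = p ^ m"
    using H(2) by (simp add: order_def)
  ultimately show ?thesis
    using conj_H.card_mod_eq_card_fixed_points[OF \<open>finite ?C\<close> C_E _ p] by simp
qed

lemma (in group) normalizer_ne_self_if_prime_power_order:
  assumes p: "Factorial_Ring.prime p" and order: "order G = p ^ n"
    and H: "subgroup H G" "H \<noteq> carrier G"
  shows "normalizer G H \<noteq> H"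
proof
  assume N: "normalizer G H = H"
  let ?C = "subgroup_conj_class G H"
  have fin: "finite (carrier G)"
    using order p unfolding order_def by (metis card.infinite power_not_zero prime_gt_0_nat not_gr0)
  have H_carrier: "H \<subseteq> carrier G"
    using subgroup.subset[OF H(1)] .
  have C_order: "card ?C * card H = p ^ n"
    using card_subgroup_conj_class_mult_normalizer[OF H_carrier] N order by simp
  have "card ?C \<noteq> 1"
  proof
    assume "card ?C = 1"
    then have "card H = card (carrier G)"
      using C_order order unfolding order_def by simp
    then show False
      using H fin H_carrier card_subset_eq by blast
  qed
  moreover have "card ?C dvd p ^ n"
    using dvd_triv_left[of "card ?C" "card H"] C_order by simp
  ultimately have "p dvd card ?C"
    by (intro prime_dvd_if_dvd_prime_power[OF p])
  obtain m where "card H = p ^ m"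
    using dvd_triv_right[of "card H" "card ?C"] C_order divides_primepow_nat[OF p] by auto
  then have "card ?C mod p = 1 mod p"
    using card_subgroup_conj_class_mod_eq_fixed[OF fin p H(1) _ H_carrier]
      conjugates_fixed_by_self_normalizing[OF fin H(1) N] by simp
  with \<open>p dvd card ?C\<close> p show False
    by (simp add: dvd_eq_mod_eq_0)
qed

lemma (in group) card_subgroup_dvd_order:
  assumes "subgroup H G"
  shows "card H dvd order G"
  using lagrange[OF assms] by (metis dvd_triv_right)

lemma (in group) card_dvd_card_if_subgroup_subset:
  assumes "subgroup K G" "subgroup H G" "K \<subseteq> H"
  shows "card K dvd card H"
  using group.card_subgroup_dvd_order[OF subgroup_imp_group[OF assms(2)] subgroup_incl[OF assms]]
  by (simp add: order_def)

lemma (in group) exists_subgroup_of_prime_power_order: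
  assumes "finite (carrier G)" "Factorial_Ring.prime p" "p ^ a dvd order G"
  obtains S where "subgroup S G" "card S = p ^ a"
proof -
  obtain m where "order G = p ^ a * m"
    using assms(3) by (auto elim: dvdE)
  then show ?thesis
    using sylow_thm[OF assms(2) is_group _ assms(1)] that by blast
qed

lemma (in group) exists_sylow_subgroup_containing_center:
  assumes fin: "finite (carrier G)" and ZG: "center G \<noteq> carrier G"
    and comparable: "\<And>Y. subgroup Y G \<Longrightarrow> Y \<subseteq> center G \<or> center G \<subseteq> Y"
  obtains r S where "Factorial_Ring.prime r" "subgroup S G" "card S = r ^ multiplicity r (order G)"
    "center G \<subseteq> S"
proof (rule ccontr)
  assume none: "\<not> thesis"
  have Z_carrier: "center G \<subseteq> carrier G"
    using subgroup.subset[OF center_subgroup] .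
  have Z_card: "card (center G) \<noteq> 0"
    using fin Z_carrier subgroup.one_closed[OF center_subgroup] by (auto simp: finite_subset)
  have order: "order G \<noteq> 0"
    using fin by (simp add: order_gt_0_iff_finite[symmetric])
  have "order G dvd card (center G)"
  proof (rule multiplicity_le_imp_dvd[OF order])
    fix r :: nat assume r: "Factorial_Ring.prime r"
    obtain S where S: "subgroup S G" "card S = r ^ multiplicity r (order G)"
      using exists_subgroup_of_prime_power_order[OF fin r multiplicity_dvd] .
    then have "S \<subseteq> center G"
      using comparable[OF S(1)] none that r by blast
    then have "r ^ multiplicity r (order G) dvd card (center G)"
      using card_dvd_card_if_subgroup_subset[OF S(1) center_subgroup] S(2) by simp
    then show "multiplicity r (order G) \<le> multiplicity r (card (center G))"
      using r Z_card by (intro multiplicity_geI) auto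
  qed
  then have "card (carrier G) \<le> card (center G)"
    using Z_card unfolding order_def by (simp add: dvd_imp_le)
  then show False
    using ZG fin Z_carrier by (metis card_seteq)
qed

lemma (in group) prime_power_order_if_subgroups_comparable_with_center:
  assumes fin: "finite (carrier G)" and Z1: "center G \<noteq> {\<one>}" and ZG: "center G \<noteq> carrier G"
    and comparable: "\<And>Y. subgroup Y G \<Longrightarrow> Y \<subseteq> center G \<or> center G \<subseteq> Y"
  obtains r where "Factorial_Ring.prime r" "order G = r ^ multiplicity r (order G)"
proof -
  obtain r S where r: "Factorial_Ring.prime r" and S: "subgroup S G" "center G \<subseteq> S"
    and card_S: "card S = r ^ multiplicity r (order G)"
    using exists_sylow_subgroup_containing_center[OF fin ZG comparable] by metis
  obtain i where i: "card (center G) = r ^ i"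
    using card_dvd_card_if_subgroup_subset[OF center_subgroup S] card_S divides_primepow_nat[OF r]
    by auto
  have "card (center G) \<noteq> 1"
    using Z1 subgroup.one_closed[OF center_subgroup] by (auto simp: card_1_singleton_iff)
  have "q = r" if q: "Factorial_Ring.prime q" "q dvd order G" for q
  proof -
    obtain Q where Q: "subgroup Q G" "card Q = q"
      using exists_subgroup_of_prime_power_order[OF fin q(1), of 1] q(2) by auto
    consider "Q \<subseteq> center G" | "center G \<subseteq> Q"
      using comparable[OF Q(1)] by blast
    then show ?thesis
    proof cases
      case 1
      then have "q dvd r ^ i"
        using card_dvd_card_if_subgroup_subset[OF Q(1) center_subgroup] Q(2) i by simp
      then show ?thesis
        using primes_dvd_imp_eq[OF q(1) r] prime_dvd_power[OF q(1)] by blast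
    next
      case 2
      then have "r ^ i dvd q"
        using card_dvd_card_if_subgroup_subset[OF center_subgroup Q(1)] Q(2) i by simp
      moreover have "i \<noteq> 0"
        using \<open>card (center G) \<noteq> 1\<close> i by auto
      ultimately have "r dvd q"
        using dvd_power[of i r] dvd_trans by blast
      then show ?thesis
        using primes_dvd_imp_eq[OF r q(1)] by simp
    qed
  qed
  then have "order G = r ^ multiplicity r (order G)"
    using fin by (intro eq_prime_power_if_prime_divisors_eq) (auto simp: order_gt_0_iff_finite[symmetric])
  with r show ?thesis
    using that by blast
qed

section \<open>Maximal subgroups\<close>

definition maximal_subgroup :: "('a, 'b) monoid_scheme \<Rightarrow> 'a set \<Rightarrow> bool" where
  "maximal_subgroup G M \<longleftrightarrow> subgroup M G \<and> M \<noteq> carrier G \<and>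
     (\<forall>K. subgroup K G \<longrightarrow> M \<subseteq> K \<longrightarrow> K = M \<or> K = carrier G)"

lemma (in group) exists_maximal_subgroup:
  assumes fin: "finite (carrier G)" and H: "subgroup H G" "H \<noteq> carrier G"
  obtains M where "maximal_subgroup G M" "H \<subseteq> M"
proof -
  let ?S = "{K. subgroup K G \<and> H \<subseteq> K \<and> K \<noteq> carrier G}"
  have "?S \<subseteq> Pow (carrier G)"
    by (auto dest: subgroup.subset)
  then have "finite ?S"
    using fin finite_subset by blast
  moreover have "?S \<noteq> {}"
    using H by blast
  ultimately obtain M where M: "M \<in> ?S" "\<forall>K \<in> ?S. M \<subseteq> K \<longrightarrow> M = K"
    by (meson finite_has_maximal)
  have "maximal_subgroup G M"
    unfolding maximal_subgroup_def
  proof (intro conjI allI impI)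
    show "subgroup M G" "M \<noteq> carrier G"
      using M(1) by auto
    fix K assume K: "subgroup K G" "M \<subseteq> K"
    show "K = M \<or> K = carrier G"
    proof (cases "K = carrier G")
      case False
      then have "K \<in> ?S"
        using K M(1) by auto
      then show ?thesis
        using M(2) K(2) by blast
    qed simp
  qed
  moreover have "H \<subseteq> M"
    using M(1) by blast
  ultimately show ?thesis
    by (rule that)
qed

lemma (in group) maximal_subgroup_normal_if_prime_power_order:
  assumes p: "Factorial_Ring.prime p" and order: "order G = p ^ n" and M: "maximal_subgroup G M"
  shows "normalizer G M = carrier G"
proof -
  have M_subgroup: "subgroup M G" and M_proper: "M \<noteq> carrier G"
    using M unfolding maximal_subgroup_def by auto
  have "subgroup (normalizer G M) G"
    using normalizer_imp_subgroup[OF subgroup.subset[OF M_subgroup]] .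
  moreover have "M \<subseteq> normalizer G M"
    using subgroup_subset_normalizer[OF M_subgroup] .
  moreover have "normalizer G M \<noteq> M"
    using normalizer_ne_self_if_prime_power_order[OF p order M_subgroup M_proper] .
  ultimately show ?thesis
    using M unfolding maximal_subgroup_def by blast
qed

lemma (in group) exists_maximal_subgroup_mem:
  assumes fin: "finite (carrier G)" and x: "x \<in> carrier G" and proper: "generate G {x} \<noteq> carrier G"
  obtains M where "maximal_subgroup G M" "x \<in> M"
proof -
  have "subgroup (generate G {x}) G"
    using x by (intro generate_is_subgroup) auto
  then obtain M where "maximal_subgroup G M" "generate G {x} \<subseteq> M"
    using exists_maximal_subgroup[OF fin _ proper] by blast
  then show ?thesis
    using that generate.incl[of x "{x}" G] by blast
qed

text \<open>If M1 and M2 are maximal, h \<in> M2 - M1 and g \<in> M1 - M2, then g h lies in neither,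
  so a maximal subgroup containing g h is a third one.\<close>
lemma (in group) three_maximal_subgroups_if_not_cyclic:
  assumes fin: "finite (carrier G)"
    and not_cyclic: "\<And>x. x \<in> carrier G \<Longrightarrow> generate G {x} \<noteq> carrier G"
  obtains M1 M2 M3 where "maximal_subgroup G M1" "maximal_subgroup G M2" "maximal_subgroup G M3"
    "M1 \<noteq> M2" "M1 \<noteq> M3" "M2 \<noteq> M3"
proof -
  obtain M1 where M1: "maximal_subgroup G M1"
    using exists_maximal_subgroup_mem[OF fin one_closed not_cyclic] by blast
  have M1_proper: "M1 \<noteq> carrier G" and M1_subgroup: "subgroup M1 G"
    using M1 unfolding maximal_subgroup_def by blast+
  then obtain h where h: "h \<in> carrier G" "h \<notin> M1"
    using subgroup.subset by blast
  obtain M2 where M2: "maximal_subgroup G M2" "h \<in> M2"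
    using exists_maximal_subgroup_mem[OF fin h(1) not_cyclic[OF h(1)]] by blast
  have M2_subgroup: "subgroup M2 G" and M2_proper: "M2 \<noteq> carrier G"
    using M2 unfolding maximal_subgroup_def by blast+
  have "\<not> M1 \<subseteq> M2"
    using M1 M2_subgroup M2_proper M2(2) h(2) unfolding maximal_subgroup_def by blast
  then obtain g where g: "g \<in> M1" "g \<notin> M2"
    by blast
  have g_carrier: "g \<in> carrier G"
    using g(1) subgroup.subset[OF M1_subgroup] by blast
  have gh: "g \<otimes> h \<in> carrier G"
    using g_carrier h(1) by simp
  obtain M3 where M3: "maximal_subgroup G M3" "g \<otimes> h \<in> M3"
    using exists_maximal_subgroup_mem[OF fin gh not_cyclic[OF gh]] by blast
  have "g \<otimes> h \<notin> M1"
  proof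
    assume "g \<otimes> h \<in> M1"
    then have "inv g \<otimes> (g \<otimes> h) \<in> M1"
      using g(1) subgroup.m_closed[OF M1_subgroup] subgroup.m_inv_closed[OF M1_subgroup] by blast
    with h g_carrier show False
      by (simp add: m_assoc[symmetric])
  qed
  moreover have "g \<otimes> h \<notin> M2"
  proof
    assume "g \<otimes> h \<in> M2"
    then have "(g \<otimes> h) \<otimes> inv h \<in> M2"
      using M2(2) subgroup.m_closed[OF M2_subgroup] subgroup.m_inv_closed[OF M2_subgroup] by blast
    with g h g_carrier show False
      by (simp add: m_assoc)
  qed
  ultimately show ?thesis
    using M1 M2 M3 h(2) g(2) by (intro that[of M1 M2 M3]) auto
qed

lemma (in group) center_psubset_maximal_subgroup:
  assumes ZG: "center G \<noteq> carrier G"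
    and comparable: "\<And>Y. subgroup Y G \<Longrightarrow> Y \<subseteq> center G \<or> center G \<subseteq> Y"
    and not_cyclic: "\<And>x. x \<in> carrier G \<Longrightarrow> generate G {x} \<noteq> carrier G"
    and M: "maximal_subgroup G M"
  shows "center G \<subset> M"
proof -
  have M_subgroup: "subgroup M G"
    and M_maximal: "\<And>K. subgroup K G \<Longrightarrow> M \<subseteq> K \<Longrightarrow> K = M \<or> K = carrier G"
    using M unfolding maximal_subgroup_def by blast+
  have "M \<noteq> center G"
  proof
    assume MZ: "M = center G"
    obtain x where x: "x \<in> carrier G" "x \<notin> center G"
      using ZG subgroup.subset[OF center_subgroup] by blast
    have x_gen: "x \<in> generate G {x}" and gen_subgroup: "subgroup (generate G {x}) G"
      using x(1) by (auto intro: generate.incl generate_is_subgroup)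
    then have "center G \<subseteq> generate G {x}"
      using comparable[OF gen_subgroup] x(2) by blast
    then have "generate G {x} = M"
      using M_maximal[OF gen_subgroup] not_cyclic[OF x(1)] MZ by simp
    with x x_gen MZ show False
      by blast
  qed
  moreover have "center G \<subseteq> M"
  proof (rule ccontr)
    assume "\<not> center G \<subseteq> M"
    then have "M \<subseteq> center G"
      using comparable[OF M_subgroup] by blast
    then show False
      using M_maximal[OF center_subgroup] ZG \<open>M \<noteq> center G\<close> by simp
  qed
  ultimately show ?thesis
    by blast
qed

lemma (in group) three_classes_if_subgroups_comparable_with_center:
  assumes fin: "finite (carrier G)" and Z1: "center G \<noteq> {\<one>}" and ZG: "center G \<noteq> carrier G"
    and comparable: "\<And>Y. subgroup Y G \<Longrightarrow> Y \<subseteq> center G \<or> center G \<subseteq> Y"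
  shows "3 \<le> card (subgroup_conj_class G ` {Y \<in> non_self_normalizing G. center G \<subset> Y})"
proof -
  let ?U = "{Y \<in> non_self_normalizing G. center G \<subset> Y}"
  obtain p where p: "Factorial_Ring.prime p" and order: "order G = p ^ multiplicity p (order G)"
    using prime_power_order_if_subgroups_comparable_with_center[OF fin Z1 ZG comparable] .
  have not_cyclic: "generate G {x} \<noteq> carrier G" if "x \<in> carrier G" for x
    using center_eq_carrier_if_cyclic[OF that] ZG by blast
  have "{M} \<in> subgroup_conj_class G ` ?U" if M: "maximal_subgroup G M" for M
  proof -
    have M_subgroup: "subgroup M G" and M_proper: "M \<noteq> carrier G"
      using M unfolding maximal_subgroup_def by blast+
    have normalizer: "normalizer G M = carrier G"
      using maximal_subgroup_normal_if_prime_power_order[OF p order M] .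
    have "center G \<subset> M"
      using center_psubset_maximal_subgroup[OF ZG comparable not_cyclic M] .
    moreover have "M \<noteq> {\<one>}"
      using Z1 calculation subgroup.one_closed[OF center_subgroup] by blast
    ultimately have "M \<in> ?U"
      using M_subgroup M_proper normalizer unfolding non_self_normalizing_def by auto
    moreover have "subgroup_conj_class G M = {M}"
      using subgroup_conj_class_eq_singleton[OF subgroup.subset[OF M_subgroup] normalizer] .
    ultimately show ?thesis
      by (metis rev_image_eqI)
  qed
  moreover obtain M1 M2 M3 where M: "maximal_subgroup G M1" "maximal_subgroup G M2" "maximal_subgroup G M3"
    and distinct: "M1 \<noteq> M2" "M1 \<noteq> M3" "M2 \<noteq> M3"
    using three_maximal_subgroups_if_not_cyclic[OF fin not_cyclic] by blast
  ultimately have "{{M1}, {M2}, {M3}} \<subseteq> subgroup_conj_class G ` ?U"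
    by blast
  moreover have "finite ?U"
    using finite_non_self_normalizing[OF fin] by simp
  ultimately have "card {{M1}, {M2}, {M3}} \<le> card (subgroup_conj_class G ` ?U)"
    by (intro card_mono) auto
  then show ?thesis
    using distinct by simp
qed

theorem mainTheorem13:
  fixes G (structure)
  assumes "group G"
    and "finite (carrier G)"
    and "center G \<noteq> {\<one>}"
    and "calD (G Mod (center G)) = 2"
  shows "int (calD G) - int (calD (G\<lparr>carrier := center G\<rparr>)) \<ge> 4"
proof -
  interpret group G by fact
  let ?U = "{Y \<in> non_self_normalizing G. center G \<subset> Y}"
  have quotient: "card (subgroup_conj_class G ` ?U) = 2"
    using normal.calD_FactGroup[OF center_normal] assms(4) by simp
  have ZG: "center G \<noteq> carrier G"
  proof
    assume "center G = carrier G"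
    then have "?U = {}"
      unfolding non_self_normalizing_def by (auto dest: subgroup.subset)
    with quotient show False
      by simp
  qed
  show ?thesis
  proof (cases "\<forall>Y. subgroup Y G \<longrightarrow> Y \<subseteq> center G \<or> center G \<subseteq> Y")
    case True
    then show ?thesis
      using three_classes_if_subgroups_comparable_with_center[OF assms(2,3) ZG] quotient by auto
  next
    case False
    then obtain Y0 where "subgroup Y0 G" "\<not> Y0 \<subseteq> center G" "\<not> center G \<subseteq> Y0"
      by blast
    then show ?thesis
      using calD_lower_bound[OF assms(2,3) ZG] calD_center quotient by fastforce
  qed
qed

end
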